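(* Let $\mathcal{V}$ be a finite vocabulary, let $\mathbf{x}$ be a prompt, and consider responses (trajectories) $\tau=[y_1,\dots,y_T]\in\mathcal{V}^T$ of length $T$. Let $r(\mathbf{x},\tau)$ be a target reward, let $\pi_{\mathrm{SFT}}$ be a reference token-level policy with induced trajectory distribution $\rho_{\mathrm{SFT}}$, and let $\beta>0$ and $\alpha>0$. Let $\rho_{\mathrm{BL}}$ be the baseline trajectory-level policy aligned with the target reward, $$\rho_{\mathrm{BL}}(\cdot\mid \mathbf{x})=\arg\max_{\rho}\ \mathbb{E}_{\tau\sim\rho(\cdot\mid\mathbf{x})}[r(\mathbf{x},\tau)]-\beta\,\mathbb{D}_{\mathrm{KL}}\big[\rho(\cdot\mid\mathbf{x})\,\|\,\rho_{\mathrm{SFT}}(\cdot\mid\mathbf{x})\big],$$ i.e. $\rho_{\mathrm{BL}}(\tau\mid\mathbf{x})=\frac{1}{Z(\mathbf{x})}\rho_{\mathrm{SFT}}(\tau\mid\mathbf{x})\exp(r(\mathbf{x},\tau)/\beta)$, and let $\pi_{\mathrm{BL}}$ be the token-level policy inducing $\rho_{\mathrm{BL}}$. For a state $\mathbf{s}_t=[\mathbf{x},\mathbf{y}_{<t}]$ and token $z$, define $$\mathrm{TQ}^\star(\mathbf{s}_t,z)=\mathbb{E}_{\tau\sim\rho_{\mathrm{BL}}(\cdot\mid \mathbf{s}_t,z)}\big[r([\mathbf{s}_t,z],\tau)\big],$$ and define the decoding policy $$\pi_{\mathrm{alg}}(\cdot\mid\mathbf{s}_t)=\arg\max_{\pi}\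 \mathbb{E}_{z\sim\pi(\cdot\mid\mathbf{s}_t)}[\mathrm{TQ}^\star(\mathbf{s}_t,z)]-\alpha\,\mathbb{D}_{\mathrm{KL}}\big[\pi(\cdot\mid\mathbf{s}_t)\,\|\,\pi_{\mathrm{BL}}(\cdot\mid\mathbf{s}_t)\big],$$ equivalently $\pi_{\mathrm{alg}}(z\mid\mathbf{s}_t)\propto \pi_{\mathrm{BL}}(z\mid\mathbf{s}_t)\exp(\mathrm{TQ}^\star(\mathbf{s}_t,z)/\alpha)$, with induced trajectory distribution $\rho_{\mathrm{alg}}$. Let $V^*(\mathbf{x})=\max_{\rho}\mathbb{E}_{\tau\sim\rho(\cdot\mid\mathbf{x})}[r(\mathbf{x},\tau)]$ with maximizer $\rho^*$, let $V^{\mathrm{alg}}(\mathbf{x})=\mathbb{E}_{\tau\sim\rho_{\mathrm{alg}}(\cdot\mid\mathbf{x})}[r(\mathbf{x},\tau)]$, and let $\texttt{Sub-Gap}(\mathbf{x})=V^*(\mathbf{x})-V^{\mathrm{alg}}(\mathbf{x})$. Then: (1) For all $\mathbf{x}$, $$\texttt{Sub-Gap}(\mathbf{x})\le \beta\,\mathbb{D}_{\mathrm{KL}}\big(\rho^*(\cdot\mid\mathbf{x})\,\|\,\rho_{\mathrm{SFT}}(\cdot\mid\mathbf{x})\big)-\alpha\, h_\alpha(\mathbf{x}),$$ where $h_\alpha(\mathbf{x})=\sum_{t=1}^{T-1}\mathbb{E}_{\mathbf{y}_{<t}\sim\rho_{\mathrm{alg}}(\cdot\mid\mathbf{x})}\Big[\mathbb{D}_{\mathrm{KL}}\big(\pi_{\mathrm{alg}}(\cdot\mid[\mathbf{x},\mathbf{y}_{<t}])\,\|\,\pi_{\mathrm{BL}}(\cdot\mid[\mathbf{x},\mathbf{y}_{<t}])\big)\Big]\ge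 0$ (with $\mathbf{y}_{<1}$ the empty prefix). (2) If moreover $0\le r\le R_{\max}$, then $$\mathbb{D}_{\mathrm{KL}}\big(\rho_{\mathrm{alg}}(\cdot\mid\mathbf{x})\,\|\,\rho_{\mathrm{SFT}}(\cdot\mid\mathbf{x})\big)\le\Big(\frac{1}{\beta}+\frac{T}{\alpha}\Big)R_{\max}.$$
   Context: Language generation is modeled as a token-level MDP: a state $\mathbf{s}_t=[\mathbf{x},\mathbf{y}_{<t}]$ is the prompt concatenated with the tokens generated so far, an action is the next token $z\in\mathcal{V}$, and transitions are deterministic concatenation. A token-level policy $\pi(\cdot\mid\mathbf{s}_t)$ induces a trajectory-level distribution $\rho_\pi(\mathbf{y}\mid\mathbf{x})=\prod_{t}\pi(y_t\mid[\mathbf{x},\mathbf{y}_{<t}])$; conditional trajectory distributions such as $\rho(\cdot\mid\mathbf{s}_t,z)$ denote the distribution of the completion $\tau$ given the prefix $[\mathbf{s}_t,z]$, and $r([\mathbf{s}_t,z],\tau)$ is the reward of the full response obtained by concatenation. $Z(\mathbf{x})$ is the normalizing constant. This is the "direct transfer" setting, in which the baseline aligned model is aligned with the same target reward $r$. *)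

theory Defs
  imports Complex_Main "HOL-Library.Extended_Real"
begin

(* Token-level policies: pol x prefix z = probability of next token z given state [x, prefix]. *)

definition trajs :: "nat \<Rightarrow> 'v list set" where
  "trajs n = {ys. length ys = n}"

definition valid_policy :: "nat \<Rightarrow> ('p \<Rightarrow> 'v::finite list \<Rightarrow> 'v \<Rightarrow> real) \<Rightarrow> 'p \<Rightarrow> bool" where
  "valid_policy T pol x \<longleftrightarrow>
     (\<forall>p. length p < T \<longrightarrow> (\<forall>z. 0 \<le> pol x p z) \<and> (\<Sum>z\<in>UNIV. pol x p z) = 1)"

definition cond_rho :: "('p \<Rightarrow> 'v list \<Rightarrow> 'v \<Rightarrow> real) \<Rightarrow> 'p \<Rightarrow> 'v list \<Rightarrow> 'v list \<Rightarrow> real" where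
  "cond_rho pol x p tau = (\<Prod>i<length tau. pol x (p @ take i tau) (tau ! i))"

definition rho :: "('p \<Rightarrow> 'v list \<Rightarrow> 'v \<Rightarrow> real) \<Rightarrow> 'p \<Rightarrow> 'v list \<Rightarrow> real" where
  "rho pol x tau = cond_rho pol x [] tau"

definition traj_dist :: "nat \<Rightarrow> ('v list \<Rightarrow> real) \<Rightarrow> bool" where
  "traj_dist T q \<longleftrightarrow> (\<forall>tau\<in>trajs T. 0 \<le> q tau) \<and> sum q (trajs T) = 1"

definition expect :: "nat \<Rightarrow> ('v list \<Rightarrow> real) \<Rightarrow> ('v list \<Rightarrow> real) \<Rightarrow> real" where
  "expect T q f = (\<Sum>tau\<in>trajs T. q tau * f tau)"

definition KL :: "'a set \<Rightarrow> ('a \<Rightarrow> real) \<Rightarrow> ('a \<Rightarrow> real) \<Rightarrow> ereal" where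
  "KL A p q = (if \<exists>a\<in>A. p a \<noteq> 0 \<and> q a = 0 then \<infinity>
               else ereal (\<Sum>a\<in>A. if p a = 0 then 0 else p a * ln (p a / q a)))"

definition Z_BL :: "nat \<Rightarrow> ('p \<Rightarrow> 'v list \<Rightarrow> 'v \<Rightarrow> real) \<Rightarrow> ('p \<Rightarrow> 'v list \<Rightarrow> real) \<Rightarrow> real \<Rightarrow> 'p \<Rightarrow> real" where
  "Z_BL T pi_sft r \<beta> x = (\<Sum>tau\<in>trajs T. rho pi_sft x tau * exp (r x tau / \<beta>))"

definition rho_BL :: "nat \<Rightarrow> ('p \<Rightarrow> 'v list \<Rightarrow> 'v \<Rightarrow> real) \<Rightarrow> ('p \<Rightarrow> 'v list \<Rightarrow> real) \<Rightarrow> real \<Rightarrow> 'p \<Rightarrow> 'v list \<Rightarrow> real" where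
  "rho_BL T pi_sft r \<beta> x tau = rho pi_sft x tau * exp (r x tau / \<beta>) / Z_BL T pi_sft r \<beta> x"

definition TQ :: "nat \<Rightarrow> ('p \<Rightarrow> 'v list \<Rightarrow> 'v \<Rightarrow> real) \<Rightarrow> ('p \<Rightarrow> 'v list \<Rightarrow> real) \<Rightarrow> 'p \<Rightarrow> 'v list \<Rightarrow> 'v \<Rightarrow> real" where
  "TQ T pi_bl r x p z =
     (\<Sum>tau\<in>trajs (T - length p - 1). cond_rho pi_bl x (p @ [z]) tau * r x (p @ z # tau))"

definition pi_alg :: "nat \<Rightarrow> ('p \<Rightarrow> 'v::finite list \<Rightarrow> 'v \<Rightarrow> real) \<Rightarrow> ('p \<Rightarrow> 'v list \<Rightarrow> real) \<Rightarrow> real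
                      \<Rightarrow> 'p \<Rightarrow> 'v list \<Rightarrow> 'v \<Rightarrow> real" where
  "pi_alg T pi_bl r \<alpha> x p z =
     pi_bl x p z * exp (TQ T pi_bl r x p z / \<alpha>) /
     (\<Sum>z'\<in>UNIV. pi_bl x p z' * exp (TQ T pi_bl r x p z' / \<alpha>))"

definition h_alpha :: "nat \<Rightarrow> ('p \<Rightarrow> 'v::finite list \<Rightarrow> 'v \<Rightarrow> real) \<Rightarrow> ('p \<Rightarrow> 'v list \<Rightarrow> real) \<Rightarrow> real \<Rightarrow> 'p \<Rightarrow> ereal" where
  "h_alpha T pi_bl r \<alpha> x =
     (\<Sum>t\<in>{1..T-1}. \<Sum>p\<in>trajs (t - 1).
        ereal (rho (pi_alg T pi_bl r \<alpha>) x p) * KL UNIV (pi_alg T pi_bl r \<alpha> x p) (pi_bl x p))"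

end

theory Submission
  imports Defs
begin

(* For a distribution q and its exponential tilt g = q exp(f/gamma) / Z, two variational facts hold:
   gamma KL(g||q) <= E_g f - E_q f, and E_p f - E_g f <= gamma KL(p||q) for every distribution p.
   rho_BL is the tilt of rho_SFT by r/beta, so the second fact bounds V* - V_BL by
   beta KL(rho*||rho_SFT).
   For (2), a tilt by a function with values in [0, M] is pointwise at most q exp(M/gamma), so
   rho_alg <= rho_SFT exp(Rmax/beta + T Rmax/alpha) on every trajectory. *)

definition distr_on :: "'a set \<Rightarrow> ('a \<Rightarrow> real) \<Rightarrow> bool" where
  "distr_on A p \<longleftrightarrow> (\<forall>a\<in>A. 0 \<le> p a) \<and> sum p A = 1"

definition relative_entropy :: "'a set \<Rightarrow> ('a \<Rightarrow> real) \<Rightarrow> ('a \<Rightarrow> real) \<Rightarrow> real" where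
  "relative_entropy A p q = (\<Sum>a\<in>A. if p a = 0 then 0 else p a * ln (p a / q a))"

definition partition_fun :: "'a set \<Rightarrow> ('a \<Rightarrow> real) \<Rightarrow> real \<Rightarrow> ('a \<Rightarrow> real) \<Rightarrow> real" where
  "partition_fun A q \<gamma> f = (\<Sum>a\<in>A. q a * exp (f a / \<gamma>))"

definition tilt :: "'a set \<Rightarrow> ('a \<Rightarrow> real) \<Rightarrow> real \<Rightarrow> ('a \<Rightarrow> real) \<Rightarrow> 'a \<Rightarrow> real" where
  "tilt A q \<gamma> f a = q a * exp (f a / \<gamma>) / partition_fun A q \<gamma> f"

lemma traj_dist_iff_distr_on: "traj_dist T q \<longleftrightarrow> distr_on (trajs T) q"
  by (simp add: traj_dist_def distr_on_def)

lemma KL_eq_relative_entropy: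
  "\<forall>a\<in>A. p a \<noteq> 0 \<longrightarrow> q a \<noteq> 0 \<Longrightarrow> KL A p q = ereal (relative_entropy A p q)"
  by (auto simp: KL_def relative_entropy_def)

lemma entropy_term_ge:
  fixes p q c :: real
  assumes "0 \<le> p" "0 \<le> q" "p \<noteq> 0 \<Longrightarrow> q \<noteq> 0"
  shows "p * c + p - q * exp c \<le> (if p = 0 then 0 else p * ln (p / q))"
proof (cases "p = 0")
  case False
  then have "p > 0" "q > 0" using assms by auto
  have "1 + (c - ln (p / q)) \<le> exp (c - ln (p / q))" by (rule exp_ge_add_one_self)
  also have "\<dots> = q * exp c / p" using \<open>p > 0\<close> \<open>q > 0\<close> by (simp add: exp_diff)
  finally show ?thesis using False \<open>p > 0\<close> by (simp add: field_simps)
qed (use assms in simp)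

lemma partition_fun_pos:
  assumes "finite A" "distr_on A q"
  shows "0 < partition_fun A q \<gamma> f"
proof -
  obtain a where "a \<in> A" "q a \<noteq> 0"
    using assms(2) by (metis distr_on_def sum.neutral zero_neq_one)
  then have "0 < q a * exp (f a / \<gamma>)" using assms(2) by (simp add: distr_on_def order_le_neq_trans)
  then show ?thesis unfolding partition_fun_def
    by (rule sum_pos2[OF assms(1) \<open>a \<in> A\<close>]) (use assms(2) in \<open>simp add: distr_on_def\<close>)
qed

lemma variational_le_relative_entropy:
  assumes A: "finite A" and p: "distr_on A p" and q: "distr_on A q" and "\<gamma> > 0"
    and ac: "\<forall>a\<in>A. p a \<noteq> 0 \<longrightarrow> q a \<noteq> 0"
  shows "(\<Sum>a\<in>A. p a * f a) - \<gamma> * ln (partition_fun A q \<gamma> f) \<le> \<gamma> * relative_entropy A p q"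
proof -
  define N where "N = partition_fun A q \<gamma> f"
  define c where "c a = f a / \<gamma> - ln N" for a
  have "N > 0" unfolding N_def by (rule partition_fun_pos[OF A q])
  have "(\<Sum>a\<in>A. p a * c a + p a - q a * exp (c a)) \<le> relative_entropy A p q"
    unfolding relative_entropy_def
    by (rule sum_mono, rule entropy_term_ge) (use p q ac in \<open>auto simp: distr_on_def\<close>)
  moreover have "(\<Sum>a\<in>A. q a * exp (c a)) = 1"
    using \<open>N > 0\<close> by (simp add: c_def exp_diff sum_divide_distrib[symmetric] N_def partition_fun_def)
  moreover have "sum p A = 1" using p by (simp add: distr_on_def)
  ultimately have "(\<Sum>a\<in>A. p a * f a) / \<gamma> - ln N \<le> relative_entropy A p q"
    by (simp add: c_def sum.distrib sum_subtractf right_diff_distrib sum_divide_distrib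
        sum_distrib_right[symmetric])
  then show ?thesis using \<open>\<gamma> > 0\<close> unfolding N_def by (simp add: field_simps)
qed

lemma relative_entropy_nonneg:
  assumes "finite A" "distr_on A p" "distr_on A q" "\<forall>a\<in>A. p a \<noteq> 0 \<longrightarrow> q a \<noteq> 0"
  shows "0 \<le> relative_entropy A p q"
  using variational_le_relative_entropy[OF assms(1-3) zero_less_one assms(4), of "\<lambda>_. 0"] assms(3)
  by (simp add: partition_fun_def distr_on_def)

lemma expectation_le_log_partition:
  assumes "finite A" "distr_on A q" "\<gamma> > 0"
  shows "(\<Sum>a\<in>A. q a * f a) \<le> \<gamma> * ln (partition_fun A q \<gamma> f)"
proof -
  have "relative_entropy A q q = 0" by (auto simp: relative_entropy_def intro!: sum.neutral)
  then show ?thesis using variational_le_relative_entropy[OF assms(1,2,2,3), of f] by simp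
qed

lemma distr_on_tilt:
  assumes "finite A" "distr_on A q"
  shows "distr_on A (tilt A q \<gamma> f)"
  using partition_fun_pos[OF assms, of \<gamma> f] assms(2)
  by (simp add: distr_on_def tilt_def sum_divide_distrib[symmetric] partition_fun_def)

lemma tilt_eq_0_if: "q a = 0 \<Longrightarrow> tilt A q \<gamma> f a = 0"
  by (simp add: tilt_def)

lemma relative_entropy_tilt:
  assumes A: "finite A" and q: "distr_on A q" and "\<gamma> > 0"
  shows "\<gamma> * relative_entropy A (tilt A q \<gamma> f) q
           = (\<Sum>a\<in>A. tilt A q \<gamma> f a * f a) - \<gamma> * ln (partition_fun A q \<gamma> f)"
proof -
  let ?g = "tilt A q \<gamma> f" and ?N = "partition_fun A q \<gamma> f"
  have "?N > 0" by (rule partition_fun_pos[OF A q])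
  have "relative_entropy A ?g q = (\<Sum>a\<in>A. ?g a * (f a / \<gamma> - ln ?N))"
    unfolding relative_entropy_def
  proof (rule sum.cong[OF refl])
    fix a
    show "(if ?g a = 0 then 0 else ?g a * ln (?g a / q a)) = ?g a * (f a / \<gamma> - ln ?N)"
    proof (cases "?g a = 0")
      case False
      then have "q a \<noteq> 0" using tilt_eq_0_if by metis
      then have "?g a / q a = exp (f a / \<gamma>) / ?N" by (simp add: tilt_def)
      then show ?thesis using \<open>?N > 0\<close> by (simp add: ln_div)
    qed simp
  qed
  also have "\<dots> = (\<Sum>a\<in>A. ?g a * f a) / \<gamma> - ln ?N"
    using distr_on_tilt[OF A q, of \<gamma> f]
    by (simp add: distr_on_def right_diff_distrib sum_subtractf sum_divide_distrib
        sum_distrib_right[symmetric])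
  finally show ?thesis using \<open>\<gamma> > 0\<close> by (simp add: field_simps)
qed

lemma relative_entropy_tilt_le:
  assumes "finite A" "distr_on A q" "\<gamma> > 0"
  shows "\<gamma> * relative_entropy A (tilt A q \<gamma> f) q
           \<le> (\<Sum>a\<in>A. tilt A q \<gamma> f a * f a) - (\<Sum>a\<in>A. q a * f a)"
  using relative_entropy_tilt[OF assms, of f] expectation_le_log_partition[OF assms, of f] by simp

lemma expectation_gap_le_relative_entropy:
  assumes A: "finite A" and p: "distr_on A p" and q: "distr_on A q" and "\<gamma> > 0"
    and ac: "\<forall>a\<in>A. p a \<noteq> 0 \<longrightarrow> q a \<noteq> 0"
  shows "(\<Sum>a\<in>A. p a * f a) - (\<Sum>a\<in>A. tilt A q \<gamma> f a * f a) \<le> \<gamma> * relative_entropy A p q"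
proof -
  have "0 \<le> relative_entropy A (tilt A q \<gamma> f) q"
    by (rule relative_entropy_nonneg[OF A distr_on_tilt[OF A q] q]) (metis tilt_eq_0_if)
  then show ?thesis
    using variational_le_relative_entropy[OF A p q \<open>\<gamma> > 0\<close> ac, of f]
      relative_entropy_tilt[OF A q \<open>\<gamma> > 0\<close>, of f] \<open>\<gamma> > 0\<close>
    by (smt (verit) mult_nonneg_nonneg)
qed

lemma tilt_le_exp_bound:
  assumes A: "finite A" and q: "distr_on A q" and "\<gamma> > 0"
    and f: "\<forall>a\<in>A. 0 \<le> f a \<and> f a \<le> M" and "a \<in> A"
  shows "tilt A q \<gamma> f a \<le> q a * exp (M / \<gamma>)"
proof -
  have "sum q A \<le> partition_fun A q \<gamma> f" unfolding partition_fun_def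
    by (rule sum_mono) (use q f \<open>\<gamma> > 0\<close> in \<open>auto simp: distr_on_def mult_le_cancel_left1\<close>)
  then have N: "1 \<le> partition_fun A q \<gamma> f" using q by (simp add: distr_on_def)
  have "0 \<le> q a * exp (f a / \<gamma>)" using q \<open>a \<in> A\<close> by (simp add: distr_on_def)
  then have "tilt A q \<gamma> f a \<le> q a * exp (f a / \<gamma>)"
    unfolding tilt_def using N by (simp add: divide_le_eq mult_le_cancel_left1 mult_left_mono)
  also have "\<dots> \<le> q a * exp (M / \<gamma>)"
    using q f \<open>a \<in> A\<close> \<open>\<gamma> > 0\<close> by (auto simp: distr_on_def intro!: mult_left_mono divide_right_mono)
  finally show ?thesis .
qed

lemma KL_le_if_density_le_exp:
  assumes A: "finite A" and p: "distr_on A p" and q: "\<forall>a\<in>A. 0 \<le> q a"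
    and le: "\<forall>a\<in>A. p a \<le> q a * exp C"
  shows "KL A p q \<le> ereal C"
proof -
  have ac: "\<forall>a\<in>A. p a \<noteq> 0 \<longrightarrow> q a \<noteq> 0" using le p by (force simp: distr_on_def)
  have "relative_entropy A p q \<le> (\<Sum>a\<in>A. p a * C)"
    unfolding relative_entropy_def
  proof (rule sum_mono)
    fix a assume "a \<in> A"
    show "(if p a = 0 then 0 else p a * ln (p a / q a)) \<le> p a * C"
    proof (cases "p a = 0")
      case False
      then have "0 < p a" "0 < q a" using p q ac \<open>a \<in> A\<close> by (auto simp: distr_on_def order_le_neq_trans)
      moreover have "p a / q a \<le> exp C"
        using le \<open>a \<in> A\<close> \<open>0 < q a\<close> by (simp add: divide_le_eq mult.commute)
      ultimately have "ln (p a / q a) \<le> C"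
        by (metis divide_pos_pos exp_gt_zero ln_exp ln_le_cancel_iff)
      then show ?thesis using False \<open>0 < p a\<close> by simp
    qed simp
  qed
  also have "\<dots> = C" using p by (simp add: distr_on_def sum_distrib_right[symmetric])
  finally show ?thesis using KL_eq_relative_entropy[OF ac] by simp
qed

lemma expectation_bounds_distr_on:
  assumes "distr_on A p" and f: "\<forall>a\<in>A. 0 \<le> f a \<and> f a \<le> M"
  shows "0 \<le> (\<Sum>a\<in>A. p a * f a) \<and> (\<Sum>a\<in>A. p a * f a) \<le> M"
proof
  have p: "\<forall>a\<in>A. 0 \<le> p a" "sum p A = 1" using assms(1) by (auto simp: distr_on_def)
  show "0 \<le> (\<Sum>a\<in>A. p a * f a)" using p f by (simp add: sum_nonneg)
  have "(\<Sum>a\<in>A. p a * f a) \<le> (\<Sum>a\<in>A. p a * M)"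
    by (rule sum_mono, rule mult_left_mono) (use p f in auto)
  then show "(\<Sum>a\<in>A. p a * f a) \<le> M" using p by (simp add: sum_distrib_right[symmetric])
qed

lemma finite_trajs [simp]: "finite (trajs n :: 'v::finite list set)"
proof -
  have "trajs n = {ys :: 'v list. set ys \<subseteq> UNIV \<and> length ys = n}" by (simp add: trajs_def)
  then show ?thesis using finite_lists_length_eq[OF finite_UNIV] by simp
qed

lemma trajs_0 [simp]: "trajs 0 = {[]}"
  by (auto simp: trajs_def)

lemma sum_trajs_Suc_Cons:
  "(\<Sum>q\<in>trajs (Suc n). f q) = (\<Sum>z\<in>(UNIV :: 'v::finite set). \<Sum>q\<in>trajs n. f (z # q))"
proof -
  have e: "trajs (Suc n) = (\<lambda>(z, q). z # q) ` (UNIV \<times> (trajs n :: 'v list set))"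
    by (auto simp: trajs_def length_Suc_conv image_iff)
  have i: "inj_on (\<lambda>(z, q). z # q) (UNIV \<times> (trajs n :: 'v list set))"
    by (auto simp: inj_on_def)
  show ?thesis unfolding e sum.reindex[OF i] by (simp add: sum.cartesian_product split_beta comp_def)
qed

lemma sum_trajs_Suc_snoc:
  "(\<Sum>q\<in>trajs (Suc n). f q) = (\<Sum>q\<in>trajs n. \<Sum>z\<in>(UNIV :: 'v::finite set). f (q @ [z]))"
proof -
  have e: "trajs (Suc n) = (\<lambda>(q, z). q @ [z]) ` ((trajs n :: 'v list set) \<times> UNIV)"
    by (auto simp: trajs_def length_Suc_conv_rev image_iff)
  have i: "inj_on (\<lambda>(q, z). q @ [z]) ((trajs n :: 'v list set) \<times> UNIV)"
    by (auto simp: inj_on_def)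
  show ?thesis unfolding e sum.reindex[OF i] by (simp add: sum.cartesian_product split_beta comp_def)
qed

lemma cond_rho_Nil [simp]: "cond_rho pol x p [] = 1"
  by (simp add: cond_rho_def)

lemma cond_rho_Cons: "cond_rho pol x p (z # q) = pol x p z * cond_rho pol x (p @ [z]) q"
  unfolding cond_rho_def by (simp add: prod.lessThan_Suc_shift del: prod.lessThan_Suc)

lemma cond_rho_snoc: "cond_rho pol x p (q @ [z]) = cond_rho pol x p q * pol x (p @ q) z"
  unfolding cond_rho_def by (auto simp: nth_append intro!: prod.cong)

lemma valid_policy_iff:
  "valid_policy T pol x \<longleftrightarrow> (\<forall>p. length p < T \<longrightarrow> distr_on UNIV (pol x p))"
  by (simp add: valid_policy_def distr_on_def)

lemma distr_on_cond_rho: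
  assumes v: "valid_policy T pol x" and "length p + n \<le> T"
  shows "distr_on (trajs n) (cond_rho pol x p)"
  using assms(2)
proof (induction n arbitrary: p)
  case (Suc n)
  have pol: "\<forall>z. 0 \<le> pol x p z" "(\<Sum>z\<in>UNIV. pol x p z) = 1"
    using v Suc.prems by (auto simp: valid_policy_def)
  have IH: "distr_on (trajs n) (cond_rho pol x (p @ [z]))" for z
    using Suc by simp
  have "\<forall>q\<in>trajs (Suc n). 0 \<le> cond_rho pol x p q"
    using pol IH by (auto simp: trajs_def length_Suc_conv cond_rho_Cons distr_on_def)
  moreover have "(\<Sum>q\<in>trajs (Suc n). cond_rho pol x p q) = 1"
    using pol IH by (simp add: sum_trajs_Suc_Cons cond_rho_Cons sum_distrib_left[symmetric] distr_on_def)
  ultimately show ?case by (simp add: distr_on_def)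
qed (simp add: distr_on_def)

lemma distr_on_rho: "valid_policy T pol x \<Longrightarrow> distr_on (trajs T) (rho pol x)"
  using distr_on_cond_rho[of T pol x "[]" T] by (simp add: rho_def[abs_def])

lemma rho_nonneg:
  assumes "valid_policy T pol x" "length p \<le> T"
  shows "0 \<le> rho pol x p"
  using distr_on_cond_rho[OF assms(1), of "[]" "length p"] assms(2)
  by (simp add: distr_on_def rho_def trajs_def)

lemma pi_alg_eq_tilt: "pi_alg T pol r \<alpha> x p = tilt UNIV (pol x p) \<alpha> (TQ T pol r x p)"
  by (simp add: fun_eq_iff pi_alg_def tilt_def partition_fun_def)

lemma rho_BL_eq_tilt: "rho_BL T pol r \<beta> x = tilt (trajs T) (rho pol x) \<beta> (r x)"
  by (simp add: fun_eq_iff rho_BL_def Z_BL_def tilt_def partition_fun_def)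

lemma valid_policy_pi_alg:
  "valid_policy T pol x \<Longrightarrow> valid_policy T (pi_alg T pol r \<alpha>) x"
  by (simp add: valid_policy_iff pi_alg_eq_tilt distr_on_tilt)

definition value_from :: "nat \<Rightarrow> ('p \<Rightarrow> 'v list \<Rightarrow> 'v \<Rightarrow> real) \<Rightarrow> ('p \<Rightarrow> 'v list \<Rightarrow> real)
                          \<Rightarrow> 'p \<Rightarrow> 'v list \<Rightarrow> real" where
  "value_from T pol r x p = (\<Sum>q\<in>trajs (T - length p). cond_rho pol x p q * r x (p @ q))"

lemma TQ_eq_value_from: "TQ T pol r x p z = value_from T pol r x (p @ [z])"
  by (simp add: TQ_def value_from_def)

lemma value_from_eq_sum_TQ:
  assumes "length p < T"
  shows "value_from T pol r x p = (\<Sum>z\<in>(UNIV :: 'v::finite set). pol x p z * TQ T pol r x p z)"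
proof -
  obtain k where k: "T - length p = Suc k" using assms by (metis Suc_diff_Suc)
  then have "T - length p - 1 = k" by simp
  then show ?thesis
    unfolding value_from_def TQ_def k sum_trajs_Suc_Cons
    by (simp add: cond_rho_Cons sum_distrib_left mult_ac)
qed

definition switched_value :: "nat \<Rightarrow> ('p \<Rightarrow> 'v list \<Rightarrow> 'v \<Rightarrow> real) \<Rightarrow> ('p \<Rightarrow> 'v list \<Rightarrow> 'v \<Rightarrow> real)
                              \<Rightarrow> ('p \<Rightarrow> 'v list \<Rightarrow> real) \<Rightarrow> 'p \<Rightarrow> nat \<Rightarrow> real" where
  "switched_value T pol bl r x t = (\<Sum>p\<in>trajs t. rho pol x p * value_from T bl r x p)"

lemma switched_value_0: "switched_value T pol bl r x 0 = expect T (rho bl x) (r x)"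
  by (simp add: switched_value_def value_from_def expect_def rho_def)

lemma switched_value_T: "switched_value T pol bl r x T = expect T (rho pol x) (r x)"
  unfolding switched_value_def expect_def
  by (intro sum.cong) (auto simp: trajs_def value_from_def)

lemma switched_value_Suc:
  assumes "t < T"
  shows "switched_value T pol bl r x (Suc t) - switched_value T pol bl r x t
    = (\<Sum>p\<in>trajs t. rho pol x p *
         ((\<Sum>z\<in>(UNIV :: 'v::finite set). pol x p z * TQ T bl r x p z)
          - (\<Sum>z\<in>UNIV. bl x p z * TQ T bl r x p z)))"
proof -
  have "switched_value T pol bl r x (Suc t)
      = (\<Sum>p\<in>trajs t. rho pol x p * (\<Sum>z\<in>UNIV. pol x p z * TQ T bl r x p z))"
    unfolding switched_value_def sum_trajs_Suc_snoc
    by (simp add: rho_def cond_rho_snoc TQ_eq_value_from sum_distrib_left mult_ac)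
  moreover have "switched_value T pol bl r x t
      = (\<Sum>p\<in>trajs t. rho pol x p * (\<Sum>z\<in>UNIV. bl x p z * TQ T bl r x p z))"
    unfolding switched_value_def
    using assms by (intro sum.cong) (auto simp: trajs_def value_from_eq_sum_TQ)
  ultimately show ?thesis by (simp add: right_diff_distrib sum_subtractf)
qed

lemma performance_difference:
  "expect T (rho pol x) (r x) - expect T (rho bl x) (r x)
    = (\<Sum>t<T. \<Sum>p\<in>trajs t. rho pol x p *
         ((\<Sum>z\<in>(UNIV :: 'v::finite set). pol x p z * TQ T bl r x p z)
          - (\<Sum>z\<in>UNIV. bl x p z * TQ T bl r x p z)))"
proof -
  have "expect T (rho pol x) (r x) - expect T (rho bl x) (r x)
      = (\<Sum>t<T. switched_value T pol bl r x (Suc t) - switched_value T pol bl r x t)"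
    by (simp add: sum_lessThan_telescope switched_value_0 switched_value_T)
  also have "\<dots> = (\<Sum>t<T. \<Sum>p\<in>trajs t. rho pol x p *
         ((\<Sum>z\<in>UNIV. pol x p z * TQ T bl r x p z) - (\<Sum>z\<in>UNIV. bl x p z * TQ T bl r x p z)))"
    by (intro sum.cong) (simp_all add: switched_value_Suc)
  finally show ?thesis .
qed

definition expected_step_KL :: "nat \<Rightarrow> ('p \<Rightarrow> 'v::finite list \<Rightarrow> 'v \<Rightarrow> real) \<Rightarrow> ('p \<Rightarrow> 'v list \<Rightarrow> real)
                                \<Rightarrow> real \<Rightarrow> 'p \<Rightarrow> nat \<Rightarrow> real" where
  "expected_step_KL T bl r \<alpha> x t =
     (\<Sum>p\<in>trajs t. rho (pi_alg T bl r \<alpha>) x p * relative_entropy UNIV (pi_alg T bl r \<alpha> x p) (bl x p))"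

lemma expected_step_KL_nonneg:
  fixes bl :: "'p \<Rightarrow> 'v::finite list \<Rightarrow> 'v \<Rightarrow> real"
  assumes v: "valid_policy T bl x" and "t < T"
  shows "0 \<le> expected_step_KL T bl r \<alpha> x t"
  unfolding expected_step_KL_def
proof (intro sum_nonneg mult_nonneg_nonneg)
  fix p :: "'v list" assume "p \<in> trajs t"
  then have "length p < T" using \<open>t < T\<close> by (simp add: trajs_def)
  then have bl: "distr_on UNIV (bl x p)" using v by (simp add: valid_policy_iff)
  show "0 \<le> rho (pi_alg T bl r \<alpha>) x p"
    using rho_nonneg[OF valid_policy_pi_alg[OF v]] \<open>length p < T\<close> by simp
  show "0 \<le> relative_entropy UNIV (pi_alg T bl r \<alpha> x p) (bl x p)"
    unfolding pi_alg_eq_tilt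
    by (rule relative_entropy_nonneg[OF finite_UNIV distr_on_tilt[OF finite_UNIV bl] bl])
      (metis tilt_eq_0_if)
qed

lemma pi_alg_improvement:
  fixes bl :: "'p \<Rightarrow> 'v::finite list \<Rightarrow> 'v \<Rightarrow> real"
  assumes v: "valid_policy T bl x" and "\<alpha> > 0"
  shows "\<alpha> * (\<Sum>t<T. expected_step_KL T bl r \<alpha> x t)
           \<le> expect T (rho (pi_alg T bl r \<alpha>) x) (r x) - expect T (rho bl x) (r x)"
  unfolding performance_difference sum_distrib_left expected_step_KL_def
proof (intro sum_mono, simp only: mult.left_commute[of \<alpha>], intro mult_left_mono)
  fix t and p :: "'v list" assume "t \<in> {..<T}" "p \<in> trajs t"
  then have "length p < T" by (simp add: trajs_def)
  then have bl: "distr_on UNIV (bl x p)" using v by (simp add: valid_policy_iff)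
  show "\<alpha> * relative_entropy UNIV (pi_alg T bl r \<alpha> x p) (bl x p)
      \<le> (\<Sum>z\<in>UNIV. pi_alg T bl r \<alpha> x p z * TQ T bl r x p z) - (\<Sum>z\<in>UNIV. bl x p z * TQ T bl r x p z)"
    unfolding pi_alg_eq_tilt by (rule relative_entropy_tilt_le[OF finite_UNIV bl \<open>\<alpha> > 0\<close>])
  show "0 \<le> rho (pi_alg T bl r \<alpha>) x p"
    using rho_nonneg[OF valid_policy_pi_alg[OF v]] \<open>length p < T\<close> by simp
qed

lemma h_alpha_eq_sum_expected_step_KL:
  "h_alpha T bl r \<alpha> x = ereal (\<Sum>t<T-1. expected_step_KL T bl r \<alpha> x t)"
proof -
  have KL_step: "KL UNIV (pi_alg T bl r \<alpha> x p) (bl x p)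
      = ereal (relative_entropy UNIV (pi_alg T bl r \<alpha> x p) (bl x p))" for p
    by (rule KL_eq_relative_entropy) (metis pi_alg_eq_tilt tilt_eq_0_if)
  have "{1..T-1} = Suc ` {..<T-1}" by (simp add: image_Suc_lessThan)
  then show ?thesis
    unfolding h_alpha_def by (simp add: KL_step sum.reindex expected_step_KL_def)
qed

lemma h_alpha_bounds:
  fixes bl :: "'p \<Rightarrow> 'v::finite list \<Rightarrow> 'v \<Rightarrow> real"
  assumes v: "valid_policy T bl x" and "\<alpha> > 0"
  obtains h where "h_alpha T bl r \<alpha> x = ereal h" "0 \<le> h"
    "\<alpha> * h \<le> expect T (rho (pi_alg T bl r \<alpha>) x) (r x) - expect T (rho bl x) (r x)"
proof
  let ?e = "expected_step_KL T bl r \<alpha> x"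
  show "h_alpha T bl r \<alpha> x = ereal (\<Sum>t<T-1. ?e t)" by (rule h_alpha_eq_sum_expected_step_KL)
  show "0 \<le> (\<Sum>t<T-1. ?e t)" by (rule sum_nonneg) (simp add: expected_step_KL_nonneg[OF v])
  have "(\<Sum>t<T-1. ?e t) \<le> (\<Sum>t<T. ?e t)"
    by (rule sum_mono2) (auto intro: expected_step_KL_nonneg[OF v])
  then show "\<alpha> * (\<Sum>t<T-1. ?e t) \<le> expect T (rho (pi_alg T bl r \<alpha>) x) (r x) - expect T (rho bl x) (r x)"
    using pi_alg_improvement[OF v \<open>\<alpha> > 0\<close>, of r] \<open>\<alpha> > 0\<close> by (smt (verit) mult_left_mono)
qed

lemma expect_gap_rho_BL_le_KL:
  fixes sft :: "'p \<Rightarrow> 'v::finite list \<Rightarrow> 'v \<Rightarrow> real"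
  assumes sft: "valid_policy T sft x" and "\<beta> > 0" and q: "traj_dist T q"
  shows "ereal (expect T q (r x) - expect T (rho_BL T sft r \<beta> x) (r x))
           \<le> ereal \<beta> * KL (trajs T) q (rho sft x)"
proof (cases "\<forall>\<tau>\<in>trajs T. q \<tau> \<noteq> 0 \<longrightarrow> rho sft x \<tau> \<noteq> 0")
  case True
  have "expect T q (r x) - expect T (rho_BL T sft r \<beta> x) (r x) \<le> \<beta> * relative_entropy (trajs T) q (rho sft x)"
    unfolding expect_def rho_BL_eq_tilt
    by (rule expectation_gap_le_relative_entropy[OF finite_trajs _ distr_on_rho[OF sft] \<open>\<beta> > 0\<close> True])
      (use q in \<open>simp add: traj_dist_iff_distr_on\<close>)
  then show ?thesis by (simp add: KL_eq_relative_entropy[OF True])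
next
  case False
  then show ?thesis using \<open>\<beta> > 0\<close> by (auto simp: KL_def)
qed

lemma TQ_bounds:
  fixes bl :: "'p \<Rightarrow> 'v::finite list \<Rightarrow> 'v \<Rightarrow> real"
  assumes v: "valid_policy T bl x" and "length p < T"
    and r: "\<forall>\<tau>\<in>trajs T. 0 \<le> r x \<tau> \<and> r x \<tau> \<le> M"
  shows "0 \<le> TQ T bl r x p z \<and> TQ T bl r x p z \<le> M"
  unfolding TQ_def
proof (rule expectation_bounds_distr_on)
  show "distr_on (trajs (T - length p - 1)) (cond_rho bl x (p @ [z]))"
    by (rule distr_on_cond_rho[OF v]) (use \<open>length p < T\<close> in simp)
  show "\<forall>q\<in>trajs (T - length p - 1). 0 \<le> r x (p @ z # q) \<and> r x (p @ z # q) \<le> M"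
    using r \<open>length p < T\<close> by (auto simp: trajs_def)
qed

lemma rho_pi_alg_le:
  fixes bl :: "'p \<Rightarrow> 'v::finite list \<Rightarrow> 'v \<Rightarrow> real"
  assumes v: "valid_policy T bl x" and "\<alpha> > 0"
    and r: "\<forall>\<tau>\<in>trajs T. 0 \<le> r x \<tau> \<and> r x \<tau> \<le> M" and "\<tau> \<in> trajs T"
  shows "rho (pi_alg T bl r \<alpha>) x \<tau> \<le> rho bl x \<tau> * exp (M / \<alpha>) ^ T"
proof -
  have len: "length \<tau> = T" using \<open>\<tau> \<in> trajs T\<close> by (simp add: trajs_def)
  have step: "0 \<le> pi_alg T bl r \<alpha> x p z \<and> pi_alg T bl r \<alpha> x p z \<le> bl x p z * exp (M / \<alpha>)"
    if "length p < T" for p z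
  proof -
    have bl: "distr_on UNIV (bl x p)" using v that by (simp add: valid_policy_iff)
    show ?thesis
      unfolding pi_alg_eq_tilt
      using distr_on_tilt[OF finite_UNIV bl] TQ_bounds[where r=r, OF v that r]
        tilt_le_exp_bound[OF finite_UNIV bl \<open>\<alpha> > 0\<close>]
      by (simp add: distr_on_def)
  qed
  have "rho (pi_alg T bl r \<alpha>) x \<tau> \<le> (\<Prod>i<length \<tau>. bl x (take i \<tau>) (\<tau> ! i) * exp (M / \<alpha>))"
    unfolding rho_def cond_rho_def by (rule prod_mono) (use step len in simp)
  also have "\<dots> = rho bl x \<tau> * exp (M / \<alpha>) ^ T"
    by (simp add: prod.distrib rho_def cond_rho_def len)
  finally show ?thesis .
qed

lemma KL_rho_pi_alg_le:
  fixes bl sft :: "'p \<Rightarrow> 'v::finite list \<Rightarrow> 'v \<Rightarrow> real"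
  assumes bl: "valid_policy T bl x" and sft: "valid_policy T sft x" and "\<alpha> > 0" "\<beta> > 0"
    and induces: "\<forall>\<tau>\<in>trajs T. rho bl x \<tau> = rho_BL T sft r \<beta> x \<tau>"
    and r: "\<forall>\<tau>\<in>trajs T. 0 \<le> r x \<tau> \<and> r x \<tau> \<le> M"
  shows "KL (trajs T) (rho (pi_alg T bl r \<alpha>) x) (rho sft x) \<le> ereal ((1 / \<beta> + real T / \<alpha>) * M)"
proof (rule KL_le_if_density_le_exp[OF finite_trajs distr_on_rho[OF valid_policy_pi_alg[OF bl]]])
  show "\<forall>\<tau>\<in>trajs T. 0 \<le> rho sft x \<tau>" using distr_on_rho[OF sft] by (simp add: distr_on_def)
  show "\<forall>\<tau>\<in>trajs T. rho (pi_alg T bl r \<alpha>) x \<tau> \<le> rho sft x \<tau> * exp ((1 / \<beta> + real T / \<alpha>) * M)"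
  proof
    fix \<tau> :: "'v list" assume "\<tau> \<in> trajs T"
    have "rho bl x \<tau> \<le> rho sft x \<tau> * exp (M / \<beta>)"
      using induces tilt_le_exp_bound[where f="r x", OF finite_trajs distr_on_rho[OF sft] \<open>\<beta> > 0\<close> r \<open>\<tau> \<in> trajs T\<close>]
        \<open>\<tau> \<in> trajs T\<close> by (simp add: rho_BL_eq_tilt)
    then have "rho bl x \<tau> * exp (M / \<alpha>) ^ T \<le> rho sft x \<tau> * exp (M / \<beta>) * exp (M / \<alpha>) ^ T"
      by (rule mult_right_mono) simp
    also have "\<dots> = rho sft x \<tau> * exp ((1 / \<beta> + real T / \<alpha>) * M)"
      by (simp add: exp_of_nat_mult[symmetric] exp_add[symmetric] algebra_simps)
    finally show "rho (pi_alg T bl r \<alpha>) x \<tau> \<le> rho sft x \<tau> * exp ((1 / \<beta> + real T / \<alpha>) * M)"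
      using rho_pi_alg_le[where r=r, OF bl \<open>\<alpha> > 0\<close> r \<open>\<tau> \<in> trajs T\<close>] by linarith
  qed
qed

theorem theorem1:
  fixes T :: nat and x :: 'p
    and r :: "'p \<Rightarrow> 'v::finite list \<Rightarrow> real"
    and pi_sft pi_bl :: "'p \<Rightarrow> 'v list \<Rightarrow> 'v \<Rightarrow> real"
    and \<beta> \<alpha> :: real
    and rho_star :: "'v list \<Rightarrow> real"
  assumes beta_pos: "\<beta> > 0" and alpha_pos: "\<alpha> > 0"
    and sft: "valid_policy T pi_sft x"
    and bl: "valid_policy T pi_bl x"
    and bl_induces: "\<forall>tau\<in>trajs T. rho pi_bl x tau = rho_BL T pi_sft r \<beta> x tau"
    and star_dist: "traj_dist T rho_star"
    and star_max: "\<forall>q. traj_dist T q \<longrightarrow> expect T q (r x) \<le> expect T rho_star (r x)"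
  shows "ereal (expect T rho_star (r x) - expect T (rho (pi_alg T pi_bl r \<alpha>) x) (r x))
           \<le> ereal \<beta> * KL (trajs T) rho_star (rho pi_sft x) - ereal \<alpha> * h_alpha T pi_bl r \<alpha> x
       \<and> h_alpha T pi_bl r \<alpha> x \<ge> 0
       \<and> (\<forall>Rmax. (\<forall>tau\<in>trajs T. 0 \<le> r x tau \<and> r x tau \<le> Rmax) \<longrightarrow>
            KL (trajs T) (rho (pi_alg T pi_bl r \<alpha>) x) (rho pi_sft x)
              \<le> ereal ((1 / \<beta> + real T / \<alpha>) * Rmax))"
proof -
  let ?E_star = "expect T rho_star (r x)" and ?E_alg = "expect T (rho (pi_alg T pi_bl r \<alpha>) x) (r x)"
    and ?E_BL = "expect T (rho_BL T pi_sft r \<beta> x) (r x)"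
    and ?K = "ereal \<beta> * KL (trajs T) rho_star (rho pi_sft x)"
  obtain h where h: "h_alpha T pi_bl r \<alpha> x = ereal h" "0 \<le> h" and improvement: "\<alpha> * h \<le> ?E_alg - ?E_BL"
    using h_alpha_bounds[OF bl alpha_pos, of r] bl_induces by (auto simp: expect_def)
  have baseline: "ereal (?E_star - ?E_BL) \<le> ?K"
    by (rule expect_gap_rho_BL_le_KL[OF sft beta_pos star_dist])
  have "ereal (?E_star - ?E_alg) \<le> ?K - ereal (\<alpha> * h)"
    using baseline improvement by (cases ?K) auto
  then show ?thesis
    using h KL_rho_pi_alg_le[OF bl sft alpha_pos beta_pos bl_induces] by simp
qed

end
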